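(* Let $n\ge 2$, let $T=\{1,\dots,n\}$ and let $\mathcal T$ be a topology on $T$. Fix an integer $k\ge 1$ and let $X_{k-1}$ be the set of old points at stage $k$. For each $i\in\{1,\dots,n-1\}\setminus X_{k-1}$ let $N_i$ be the number of new open $k$-sets of the quotient space $Q^{i}$. Then there is an integer $s\ge 0$ (depending on $k$) such that $N_i\in\{s,s+1,s+2\}$ for every $i\in\{1,\dots,n-1\}\setminus X_{k-1}$.
   Context: For $\alpha\in T$, $\alpha^{*}$ denotes the smallest open set of $\mathcal T$ containing $\alpha$. For an integer $m\ge 0$, an $m$-system is an open set $P$ of $\mathcal T$ such that $P\setminus\{n\}$ has exactly $m$ points; upper if $n\notin P$, lower if $n\in P$. At stage $k$, a point $\alpha\neq n$ is old if $\alpha^{*}$ is an $m$-system for some $m<k$, and new if $\alpha^{*}$ is a $k$-system; $X_{k-1}$ is the set of old points. A $k$-system is new if it contains a point $p\neq n$ not contained in any $m$-system with $m\le k-1$. For $i\in\{1,\dots,n-1\}$, $Q^{i}$ is the quotient space obtained by identifying $i$ and $n$: its underlying set is $T(i,n)=\{\{z\}: z\in T\setminus\{i,n\}\}\cup\{\{i,n\}\}$ with natural map $f_i:T\to T(i,n)$, and a set $V\subseteq T(i,n)$ is open iff $f_i^{-1}(V)\in\mathcal T$. The spaces $Q^{i}$ with $i\notin X_{k-1}$ are called new quotient spaces (at stage $k$). A new open $k$-set of $Q^{i}$ is an open set $V$ of $Q^{i}$ with exactly $k$ elements such that $f_i^{-1}(V)$ is a new $k$-system of $\mathcal T$. *)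

theory Defs
  imports "HOL-Analysis.Analysis"
begin

definition min_open :: "nat topology \<Rightarrow> nat \<Rightarrow> nat set" where
  "min_open X a = \<Inter>{U. openin X U \<and> a \<in> U}"

definition m_system :: "nat topology \<Rightarrow> nat \<Rightarrow> nat \<Rightarrow> nat set \<Rightarrow> bool" where
  "m_system X n m P \<longleftrightarrow> openin X P \<and> card (P - {n}) = m"

definition old_points :: "nat topology \<Rightarrow> nat \<Rightarrow> nat \<Rightarrow> nat set" where
  "old_points X n k = {a \<in> topspace X. a \<noteq> n \<and> (\<exists>m<k. m_system X n m (min_open X a))}"

definition new_k_system :: "nat topology \<Rightarrow> nat \<Rightarrow> nat \<Rightarrow> nat set \<Rightarrow> bool" where
  "new_k_system X n k P \<longleftrightarrow> m_system X n k P \<and>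
     (\<exists>p\<in>P. p \<noteq> n \<and> \<not> (\<exists>m Q. m \<le> k - 1 \<and> m_system X n m Q \<and> p \<in> Q))"

text \<open>Natural map f_i : T \<rightarrow> T(i,n) identifying i and n.\<close>
definition qmap :: "nat \<Rightarrow> nat \<Rightarrow> nat \<Rightarrow> nat set" where
  "qmap n i z = (if z = i \<or> z = n then {i, n} else {z})"

definition quot_open :: "nat topology \<Rightarrow> nat \<Rightarrow> nat \<Rightarrow> nat set set \<Rightarrow> bool" where
  "quot_open X n i V \<longleftrightarrow> V \<subseteq> qmap n i ` topspace X \<and>
     openin X {z \<in> topspace X. qmap n i z \<in> V}"

definition new_open_k_sets :: "nat topology \<Rightarrow> nat \<Rightarrow> nat \<Rightarrow> nat \<Rightarrow> nat set set set" where
  "new_open_k_sets X n k i = {V. quot_open X n i V \<and> card V = k \<and>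
     new_k_system X n k {z \<in> topspace X. qmap n i z \<in> V}}"

end

theory Submission
  imports Defs
begin

text \<open>Pulling back along the natural map identifies the new open \<open>k\<close>-sets of \<open>Q\<^sup>i\<close> with the
  new \<open>k\<close>-systems \<open>P\<close> that contain \<open>i\<close> exactly when they contain \<open>n\<close>. If \<open>i\<close> is not old, then
  \<open>i\<^sup>*\<close> has at least \<open>k\<close> points besides \<open>n\<close>, so a new \<open>k\<close>-system through \<open>i\<close> agrees with \<open>i\<^sup>*\<close>
  off \<open>n\<close>; hence at most one upper and at most one lower new \<open>k\<close>-system contain \<open>i\<close>. With \<open>c\<close>
  the number of upper new \<open>k\<close>-systems, \<open>N\<^sub>i\<close> is therefore \<open>c\<close>, minus at most one upper system
  through \<open>i\<close>, plus at most one lower system through \<open>i\<close>.\<close>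

lemma
  assumes "finite (topspace X)" "a \<in> topspace X"
  shows openin_min_open: "openin X (min_open X a)"
    and mem_min_open: "a \<in> min_open X a"
proof -
  have "finite {U. openin X U \<and> a \<in> U}"
    by (rule finite_subset[of _ "Pow (topspace X)"]) (auto dest: openin_subset simp: assms(1))
  moreover have "{U. openin X U \<and> a \<in> U} \<noteq> {}"
    using assms(2) by auto
  ultimately show "openin X (min_open X a)"
    unfolding min_open_def by (intro openin_Inter) auto
  show "a \<in> min_open X a"
    unfolding min_open_def by auto
qed

lemma min_open_subset: "openin X U \<Longrightarrow> a \<in> U \<Longrightarrow> min_open X a \<subseteq> U"
  unfolding min_open_def by auto

lemma finite_new_k_systems:
  assumes "finite (topspace X)"
  shows "finite {P. new_k_system X n k P}"
  by (rule finite_subset[of _ "Pow (topspace X)"])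
     (auto simp: new_k_system_def m_system_def assms dest: openin_subset)

lemma new_k_system_not_old_point:
  assumes fin: "finite (topspace X)"
    and i: "i \<in> topspace X" "i \<noteq> n" "i \<notin> old_points X n k"
    and P: "new_k_system X n k P" "i \<in> P"
  shows "P - {n} = min_open X i - {n}"
proof -
  have open_P: "openin X P" and card_P: "card (P - {n}) = k"
    using P(1) by (auto simp: new_k_system_def m_system_def)
  have "finite P"
    using openin_subset[OF open_P] fin by (rule finite_subset)
  have "k \<le> card (min_open X i - {n})"
    using i openin_min_open[OF fin i(1)] by (auto simp: old_points_def m_system_def)
  moreover have "min_open X i - {n} \<subseteq> P - {n}"
    using min_open_subset[OF open_P P(2)] by blast
  ultimately show ?thesis
    using card_P \<open>finite P\<close> by (metis card_seteq finite_Diff)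
qed

lemma new_k_systems_through_not_old_point_unique:
  assumes "finite (topspace X)" "i \<in> topspace X" "i \<noteq> n" "i \<notin> old_points X n k"
    and "new_k_system X n k P" "i \<in> P" "new_k_system X n k P'" "i \<in> P'"
    and "n \<in> P \<longleftrightarrow> n \<in> P'"
  shows "P = P'"
  using new_k_system_not_old_point[OF assms(1-6)] new_k_system_not_old_point[OF assms(1-4,7,8)]
    assms(9) by blast

definition qmap_preimage :: "nat topology \<Rightarrow> nat \<Rightarrow> nat \<Rightarrow> nat set set \<Rightarrow> nat set" where
  "qmap_preimage X n i V = {z \<in> topspace X. qmap n i z \<in> V}"

lemma qmap_eq_iff:
  assumes "i \<noteq> n"
  shows "qmap n i z = qmap n i w \<longleftrightarrow> z = w \<or> (z = i \<or> z = n) \<and> (w = i \<or> w = n)"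
  using assms by (auto simp: qmap_def doubleton_eq_iff)

lemma qmap_image_preimage:
  "V \<subseteq> qmap n i ` topspace X \<Longrightarrow> qmap n i ` qmap_preimage X n i V = V"
  unfolding qmap_preimage_def by blast

lemma qmap_preimage_image:
  assumes "i \<noteq> n" "P \<subseteq> topspace X" "i \<in> P \<longleftrightarrow> n \<in> P"
  shows "qmap_preimage X n i (qmap n i ` P) = P"
  using assms by (auto simp: qmap_preimage_def qmap_eq_iff[OF assms(1)])

lemma qmap_preimage_saturated:
  "i \<in> topspace X \<Longrightarrow> n \<in> topspace X \<Longrightarrow>
     i \<in> qmap_preimage X n i V \<longleftrightarrow> n \<in> qmap_preimage X n i V"
  by (simp add: qmap_preimage_def qmap_def)

lemma card_qmap_image:
  assumes "i \<noteq> n" "i \<in> P \<longleftrightarrow> n \<in> P"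
  shows "card (qmap n i ` P) = card (P - {n})"
proof -
  have "qmap n i ` P = qmap n i ` (P - {n})"
  proof (intro equalityI subsetI)
    fix v assume "v \<in> qmap n i ` P"
    then obtain p where "p \<in> P" "v = qmap n i p" by blast
    then show "v \<in> qmap n i ` (P - {n})"
      using assms by (cases "p = n") (auto simp: qmap_def)
  qed auto
  moreover have "inj_on (qmap n i) (P - {n})"
    using assms(1) by (auto simp: inj_on_def qmap_eq_iff)
  ultimately show ?thesis
    by (simp add: card_image)
qed

lemma bij_betw_new_open_k_sets:
  assumes "i \<in> topspace X" "n \<in> topspace X" "i \<noteq> n"
  shows "bij_betw (qmap_preimage X n i) (new_open_k_sets X n k i)
           {P. new_k_system X n k P \<and> (i \<in> P \<longleftrightarrow> n \<in> P)}"
proof (rule bij_betw_byWitness[where f' = "image (qmap n i)"])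
  show "\<forall>V \<in> new_open_k_sets X n k i. qmap n i ` qmap_preimage X n i V = V"
    by (simp add: new_open_k_sets_def quot_open_def qmap_image_preimage)
  have system_subset: "P \<subseteq> topspace X"
    if "new_k_system X n k P" for P
    using that by (auto simp: new_k_system_def m_system_def dest: openin_subset)
  show "\<forall>P \<in> {P. new_k_system X n k P \<and> (i \<in> P \<longleftrightarrow> n \<in> P)}.
          qmap_preimage X n i (qmap n i ` P) = P"
    using assms(3) system_subset qmap_preimage_image by blast
  show "qmap_preimage X n i ` new_open_k_sets X n k i
          \<subseteq> {P. new_k_system X n k P \<and> (i \<in> P \<longleftrightarrow> n \<in> P)}"
    using qmap_preimage_saturated[OF assms(1,2)]
    by (auto simp: new_open_k_sets_def qmap_preimage_def)
  show "image (qmap n i) ` {P. new_k_system X n k P \<and> (i \<in> P \<longleftrightarrow> n \<in> P)}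
          \<subseteq> new_open_k_sets X n k i"
  proof clarify
    fix P assume P: "new_k_system X n k P" "i \<in> P \<longleftrightarrow> n \<in> P"
    then have "P \<subseteq> topspace X" "openin X P" "card (P - {n}) = k"
      by (auto simp: new_k_system_def m_system_def system_subset)
    moreover have "qmap_preimage X n i (qmap n i ` P) = P"
      using qmap_preimage_image[OF assms(3) \<open>P \<subseteq> topspace X\<close> P(2)] .
    ultimately show "qmap n i ` P \<in> new_open_k_sets X n k i"
      using P card_qmap_image[OF assms(3) P(2)]
      by (auto simp: new_open_k_sets_def quot_open_def qmap_preimage_def)
  qed
qed

lemma card_new_open_k_sets:
  assumes "finite (topspace X)" "i \<in> topspace X" "n \<in> topspace X" "i \<noteq> n"
    "i \<notin> old_points X n k"
  defines "C \<equiv> {P. new_k_system X n k P \<and> n \<notin> P}"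
  obtains d e where "d \<le> 1" "e \<le> 1" "e \<le> card C"
    "card (new_open_k_sets X n k i) = card C - e + d"
proof -
  define D where "D = {P. new_k_system X n k P \<and> i \<in> P \<and> n \<in> P}"
  define E where "E = {P \<in> C. i \<in> P}"
  have fin_C: "finite C" and fin_D: "finite D"
    using finite_new_k_systems[OF assms(1)] by (auto simp: C_def D_def)
  have "E \<subseteq> C"
    by (auto simp: E_def)
  have "card D \<le> 1" "card E \<le> 1"
    using new_k_systems_through_not_old_point_unique[OF assms(1,2,4,5)] fin_D
      finite_subset[OF \<open>E \<subseteq> C\<close> fin_C]
    by (auto simp: card_le_Suc0_iff_eq D_def E_def C_def)
  have "{P. new_k_system X n k P \<and> (i \<in> P \<longleftrightarrow> n \<in> P)} = D \<union> (C - E)"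
    "D \<inter> (C - E) = {}"
    by (auto simp: C_def D_def E_def)
  then have "card (new_open_k_sets X n k i) = card D + (card C - card E)"
    using bij_betw_same_card[OF bij_betw_new_open_k_sets[OF assms(2-4)]] fin_C fin_D
      card_Un_disjoint card_Diff_subset[OF finite_subset[OF \<open>E \<subseteq> C\<close> fin_C] \<open>E \<subseteq> C\<close>]
    by (metis finite_Diff)
  then show thesis
    using that \<open>card D \<le> 1\<close> \<open>card E \<le> 1\<close> card_mono[OF fin_C \<open>E \<subseteq> C\<close>] by simp
qed

theorem theorem2:
  fixes X :: "nat topology" and n k :: nat
  assumes "n \<ge> 2" and "topspace X = {1..n}" and "k \<ge> 1"
  shows "\<exists>s::nat. \<forall>i \<in> {1..n-1} - old_points X n k.
           card (new_open_k_sets X n k i) \<in> {s, s + 1, s + 2}"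
proof (intro exI ballI)
  let ?c = "card {P. new_k_system X n k P \<and> n \<notin> P}"
  fix i assume i: "i \<in> {1..n-1} - old_points X n k"
  then have "finite (topspace X)" "i \<in> topspace X" "n \<in> topspace X" "i \<noteq> n"
    "i \<notin> old_points X n k"
    using assms(1,2) by auto
  then obtain d e where "d \<le> 1" "e \<le> 1" "e \<le> ?c"
    "card (new_open_k_sets X n k i) = ?c - e + d"
    by (rule card_new_open_k_sets)
  then show "card (new_open_k_sets X n k i) \<in> {?c - 1, ?c - 1 + 1, ?c - 1 + 2}"
    by auto
qed

end
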